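(* Let $\alpha,\beta\in\mathbb{R}$ with $\alpha\neq 0$. Consider a linear pentapod with planar base, normalized as in the context, whose architecture parameters satisfy $r_l=\alpha x_l+\beta y_l$ for $l=1,\dots,5$ and $x_2=1/\alpha$. Then, as a polynomial in $u_1,\dots,u_6$, $$\det(S)=c\cdot u_3\bigl[u_6(\alpha u_1+\beta u_2-1)-u_3(\alpha u_4+\beta u_5)\bigr]$$ for some real constant $c$ depending only on the architecture parameters. In particular, whenever $c\ne 0$, the singularity variety $\{\det S=0\}\subset\mathbb{R}^6$ is the zero set of $u_3\bigl[u_6(\alpha u_1+\beta u_2-1)-u_3(\alpha u_4+\beta u_5)\bigr]$.
   Context: A linear pentapod has five legs joining base anchor points $M_l=(x_l,y_l,0)\in\mathbb{R}^3$ (planar base) to platform anchor points $m_l=\vec p+r_l\vec i$, $l=1,\dots,5$, lying on a line, where $\vec i=(u_1,u_2,u_3)$ is the direction of the platform line and $\vec p=(u_4,u_5,u_6)$ its position; a pose is a point $(u_1,\dots,u_6)\in\mathbb{R}^6$. Coordinates are normalized so that $M_1=(0,0,0)$, $r_1=0$, $M_2=(x_2,0,0)$, $r_2=1$. The singular poses are the zeros of $\det S$, where $S$ is the $7\times 7$ matrix whose rows are $(1,u_1,u_2,u_3,u_4,u_5,u_6)$, $(0,u_4,u_5,u_6,0,0,0)$, $(0,0,0,0,u_1,u_2,u_3)$, and, for $l=2,3,4,5$, $(r_l,x_l,y_l,0,r_lx_l,r_ly_l,0)$. *)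

theory Defs
  imports "Jordan_Normal_Form.Determinant"
begin

definition leg_row :: "(nat \<Rightarrow> real) \<Rightarrow> (nat \<Rightarrow> real) \<Rightarrow> (nat \<Rightarrow> real) \<Rightarrow> nat \<Rightarrow> real list" where
  "leg_row x y r l = [r l, x l, y l, 0, r l * x l, r l * y l, 0]"

definition pentapod_S :: "(nat \<Rightarrow> real) \<Rightarrow> (nat \<Rightarrow> real) \<Rightarrow> (nat \<Rightarrow> real) \<Rightarrow>
    real \<Rightarrow> real \<Rightarrow> real \<Rightarrow> real \<Rightarrow> real \<Rightarrow> real \<Rightarrow> real mat" where
  "pentapod_S x y r u1 u2 u3 u4 u5 u6 = mat_of_rows_list 7
     [[1, u1, u2, u3, u4, u5, u6],
      [0, u4, u5, u6, 0, 0, 0],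
      [0, 0, 0, 0, u1, u2, u3],
      leg_row x y r 2, leg_row x y r 3, leg_row x y r 4, leg_row x y r 5]"

end

theory Submission imports Defs begin

text \<open>Subtracting \<open>\<alpha>\<close> times column 1 and \<open>\<beta>\<close> times column 2 from column 0 of \<open>S\<close> kills the
  leg entries \<open>r\<^sub>l - \<alpha> x\<^sub>l - \<beta> y\<^sub>l\<close>, so column 0 is supported on the first two rows only.
  Columns 3 and 6 are supported on the first three rows, hence expanding along columns 6, 3 and 0
  splits off the factor \<open>u\<^sub>3 (u\<^sub>6 (\<alpha> u\<^sub>1 + \<beta> u\<^sub>2 - 1) - u\<^sub>3 (\<alpha> u\<^sub>4 + \<beta> u\<^sub>5))\<close>; the remaining
  \<open>4 \<times> 4\<close> minor depends only on the architecture and gives the constant \<open>c\<close>.\<close>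

lemma det_mat_expand_column:
  fixes f :: "nat \<times> nat \<Rightarrow> 'a::comm_ring_1"
  assumes "m = Suc n" and "j < m"
  shows "det (mat m m f) = (\<Sum>i<m. f (i, j) * (-1) ^ (i + j) *
     det (mat n n (\<lambda>(i', j'). f (if i' < i then i' else Suc i', if j' < j then j' else Suc j'))))"
proof -
  have "det (mat m m f) = (\<Sum>i<m. mat m m f $$ (i, j) * cofactor (mat m m f) i j)"
    by (rule laplace_expansion_column) (use assms in auto)
  also have "\<dots> = (\<Sum>i<m. f (i, j) * (-1) ^ (i + j) *
     det (mat n n (\<lambda>(i', j'). f (if i' < i then i' else Suc i', if j' < j then j' else Suc j'))))"
  proof (rule sum.cong[OF refl])
    fix i assume i: "i \<in> {..<m}"
    then have "mat_delete (mat m m f) i j =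
        mat n n (\<lambda>(i', j'). f (if i' < i then i' else Suc i', if j' < j then j' else Suc j'))"
      using assms by (intro eq_matI) (auto simp: mat_delete_def)
    then show "mat m m f $$ (i, j) * cofactor (mat m m f) i j = f (i, j) * (-1) ^ (i + j) *
        det (mat n n (\<lambda>(i', j'). f (if i' < i then i' else Suc i', if j' < j then j' else Suc j')))"
      using assms i by (simp add: cofactor_def)
  qed
  finally show ?thesis .
qed

lemma det_reduced_pentapod_mat:
  fixes p q u1 u2 u3 u4 u5 u6 :: "'a::comm_ring_1"
  shows "det (mat 7 7 (\<lambda>(i, j). [[p, u1, u2, u3, u4, u5, u6], [q, u4, u5, u6, 0, 0, 0],
     [0, 0, 0, 0, u1, u2, u3],
     [0, x2, y2, 0, a2, b2, 0], [0, x3, y3, 0, a3, b3, 0],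
     [0, x4, y4, 0, a4, b4, 0], [0, x5, y5, 0, a5, b5, 0]] ! i ! j))
   = det (mat 4 4 (\<lambda>(i, j). [[x2, y2, a2, b2], [x3, y3, a3, b3],
       [x4, y4, a4, b4], [x5, y5, a5, b5]] ! i ! j)) * u3 * (u6 * p - u3 * q)"
  apply (subst det_mat_expand_column[where n = 6 and j = 6], simp, simp)
  apply (simp add: eval_nat_numeral)
  apply (subst det_mat_expand_column[where n = 5 and j = 3], simp, simp)+
  apply (simp add: eval_nat_numeral)
  apply (subst det_mat_expand_column[where n = 4 and j = 0], simp, simp)+
  apply (simp add: eval_nat_numeral)
  apply (subst (1 2) cong_mat[where nr' = 4 and nc' = 4 and f' = "\<lambda>(i, j). [[x2, y2, a2, b2], [x3, y3, a3, b3],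
       [x4, y4, a4, b4], [x5, y5, a5, b5]] ! i ! j"])
  apply (auto simp: less_Suc_eq numeral_eq_Suc algebra_simps)
  done

definition leg_matrix :: "(nat \<Rightarrow> real) \<Rightarrow> (nat \<Rightarrow> real) \<Rightarrow> (nat \<Rightarrow> real) \<Rightarrow> real mat" where
  "leg_matrix x y r = mat_of_rows_list 4 (map (\<lambda>l. [x l, y l, r l * x l, r l * y l]) [2..<6])"

lemma det_pentapod_S_factorization:
  fixes x y r :: "nat \<Rightarrow> real" and \<alpha> \<beta> :: real
  assumes "\<forall>l\<in>{2..5}. r l = \<alpha> * x l + \<beta> * y l"
  shows "det (pentapod_S x y r u1 u2 u3 u4 u5 u6)
    = - det (leg_matrix x y r) * u3 * (u6 * (\<alpha> * u1 + \<beta> * u2 - 1) - u3 * (\<alpha> * u4 + \<beta> * u5))"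
proof -
  let ?S = "pentapod_S x y r u1 u2 u3 u4 u5 u6"
  let ?S' = "addcol (-\<beta>) 0 2 (addcol (-\<alpha>) 0 1 ?S)"
  have r: "r l = \<alpha> * x l + \<beta> * y l" if "2 \<le> l" "l \<le> 5" for l
    using assms that by auto
  have S: "?S \<in> carrier_mat 7 7"
    unfolding pentapod_S_def mat_of_rows_list_def by (simp add: eval_nat_numeral)
  from S have S1: "addcol (-\<alpha>) 0 1 ?S \<in> carrier_mat 7 7"
    by (simp add: mat_addcol_def)
  have col_ops: "det ?S' = det ?S"
    using det_addcol[OF _ _ S1, of 2 0 "-\<beta>"] det_addcol[OF _ _ S, of 1 0 "-\<alpha>"] by simp
  have reduced: "?S' = mat 7 7 (\<lambda>(i, j).
      [[1 - \<alpha> * u1 - \<beta> * u2, u1, u2, u3, u4, u5, u6],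
       [-(\<alpha> * u4 + \<beta> * u5), u4, u5, u6, 0, 0, 0], [0, 0, 0, 0, u1, u2, u3],
       [0, x 2, y 2, 0, r 2 * x 2, r 2 * y 2, 0], [0, x 3, y 3, 0, r 3 * x 3, r 3 * y 3, 0],
       [0, x 4, y 4, 0, r 4 * x 4, r 4 * y 4, 0], [0, x 5, y 5, 0, r 5 * x 5, r 5 * y 5, 0]] ! i ! j)"
    by (rule eq_matI)
      (auto simp: pentapod_S_def mat_of_rows_list_def leg_row_def mat_addcol_def r
        less_Suc_eq numeral_eq_Suc)
  have legs: "leg_matrix x y r = mat 4 4 (\<lambda>(i, j).
      [[x 2, y 2, r 2 * x 2, r 2 * y 2], [x 3, y 3, r 3 * x 3, r 3 * y 3],
       [x 4, y 4, r 4 * x 4, r 4 * y 4], [x 5, y 5, r 5 * x 5, r 5 * y 5]] ! i ! j)"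
    by (rule eq_matI) (auto simp: leg_matrix_def mat_of_rows_list_def less_Suc_eq numeral_eq_Suc)
  have "det ?S = det (leg_matrix x y r) * u3 *
      (u6 * (1 - \<alpha> * u1 - \<beta> * u2) - u3 * -(\<alpha> * u4 + \<beta> * u5))"
    unfolding col_ops[symmetric] reduced legs by (rule det_reduced_pentapod_mat)
  then show ?thesis
    by (simp add: algebra_simps)
qed

text \<open>Only the linear relation for the legs \<open>2..5\<close> enters.\<close>

theorem mainTheorem2:
  fixes x y r :: "nat \<Rightarrow> real" and \<alpha> \<beta> :: real
  assumes "\<alpha> \<noteq> 0"
    and "x 1 = 0" and "y 1 = 0" and "r 1 = 0"
    and "y 2 = 0" and "r 2 = 1"
    and "\<forall>l\<in>{1..5}. r l = \<alpha> * x l + \<beta> * y l"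
    and "x 2 = 1 / \<alpha>"
  shows "\<exists>c::real.
     (\<forall>u1 u2 u3 u4 u5 u6.
        det (pentapod_S x y r u1 u2 u3 u4 u5 u6)
        = c * u3 * (u6 * (\<alpha> * u1 + \<beta> * u2 - 1) - u3 * (\<alpha> * u4 + \<beta> * u5))) \<and>
     (c \<noteq> 0 \<longrightarrow>
        {(u1, u2, u3, u4, u5, u6). det (pentapod_S x y r u1 u2 u3 u4 u5 u6) = 0}
        = {(u1, u2, u3, u4, u5, u6).
             u3 * (u6 * (\<alpha> * u1 + \<beta> * u2 - 1) - u3 * (\<alpha> * u4 + \<beta> * u5)) = 0})"
proof (intro exI conjI impI allI)
  have legs: "\<forall>l\<in>{2..5}. r l = \<alpha> * x l + \<beta> * y l"
    using assms(7) by auto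
  show factorization: "det (pentapod_S x y r u1 u2 u3 u4 u5 u6) = - det (leg_matrix x y r) * u3 *
      (u6 * (\<alpha> * u1 + \<beta> * u2 - 1) - u3 * (\<alpha> * u4 + \<beta> * u5))" for u1 u2 u3 u4 u5 u6
    using det_pentapod_S_factorization[OF legs] .
  assume "- det (leg_matrix x y r) \<noteq> 0"
  then show "{(u1, u2, u3, u4, u5, u6). det (pentapod_S x y r u1 u2 u3 u4 u5 u6) = 0}
      = {(u1, u2, u3, u4, u5, u6).
           u3 * (u6 * (\<alpha> * u1 + \<beta> * u2 - 1) - u3 * (\<alpha> * u4 + \<beta> * u5)) = 0}"
    by (auto simp: factorization)
qed

end
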